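(* Let $P$ be a set of $n$ points in $\mathbb{R}^2$ in general position, and consider any convex hull peeling process on $P$, i.e. any sequence of steps each deleting one vertex of the convex hull of the current point set. Then the total number of times any point becomes active for any hull point (over the initial configuration and all steps of the process) is at most $3n$.
   Context: For the current point set $S$, $L^1$ is the set of vertices of $CH(S)$ and $L^2$ the set of vertices of $CH(S\setminus L^1)$. For consecutive points $(t,u,v)$ of $L^1$, a point $p$ is active for $u$ (equivalently, active in $u$'s triangle $\triangle(t,u,v)$) if, upon deleting $u$ from $S$ and recomputing the first and second convex layers, $p$ moves to the first layer. A point $p$ becomes active for $u$ at a given configuration if it is active for $u$ there but was not active for $u$ in the previous configuration (or if this is the initial configuration). *)

theory Defs
  imports "HOL-Analysis.Analysis"
begin

type_synonym pt = "real \<times> real"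

definition general_position :: "pt set \<Rightarrow> bool" where
  "general_position P \<longleftrightarrow>
     (\<forall>a\<in>P. \<forall>b\<in>P. \<forall>c\<in>P. a \<noteq> b \<and> a \<noteq> c \<and> b \<noteq> c \<longrightarrow> \<not> collinear {a, b, c})"

definition layer1 :: "pt set \<Rightarrow> pt set" where
  "layer1 S = {p \<in> S. p \<notin> convex hull (S - {p})}"

definition layer2 :: "pt set \<Rightarrow> pt set" where
  "layer2 S = layer1 (S - layer1 S)"

definition active :: "pt set \<Rightarrow> pt \<Rightarrow> pt \<Rightarrow> bool" where
  "active S u p \<longleftrightarrow> u \<in> layer1 S \<and> p \<in> S - {u} \<and> p \<notin> layer1 S \<and> p \<in> layer1 (S - {u})"

definition peeling_process :: "pt set \<Rightarrow> (nat \<Rightarrow> pt set) \<Rightarrow> nat \<Rightarrow> bool" where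
  "peeling_process P S m \<longleftrightarrow> S 0 = P \<and>
     (\<forall>i<m. \<exists>u\<in>layer1 (S i). S (Suc i) = S i - {u})"

definition activation_events :: "(nat \<Rightarrow> pt set) \<Rightarrow> nat \<Rightarrow> (nat \<times> pt \<times> pt) set" where
  "activation_events S m = {(i, u, p). i \<le> m \<and> active (S i) u p \<and>
      (i = 0 \<or> \<not> active (S (i - 1)) u p)}"

end

theory Submission
  imports Defs
begin

text \<open>
  Deleting points only shrinks the set, and a hull vertex of a set stays a hull vertex of
  every subset containing it. Hence once p is active for u, it stays active for u as long as
  p is present and not on the hull; in particular every pair (u, p) becomes active at most
  once, and all u for which p is ever active are active simultaneously at the last moment
  p is active for anyone. At that moment each such u lies in every Caratheodory triangle
  witnessing that p is in the hull of the other points, so there are at most three of them.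
\<close>

lemma layer1_subset: "layer1 S \<subseteq> S"
  unfolding layer1_def by blast

lemma layer1_antimono:
  assumes "p \<in> layer1 A" "p \<in> B" "B \<subseteq> A"
  shows "p \<in> layer1 B"
proof -
  have "convex hull (B - {p}) \<subseteq> convex hull (A - {p})"
    using assms(3) by (intro hull_mono) blast
  then show ?thesis
    using assms unfolding layer1_def by blast
qed

lemma active_subset:
  assumes act: "active A u p" and "B \<subseteq> A" "p \<in> B" "p \<notin> layer1 B"
  shows "active B u p"
proof -
  have p_layer: "p \<in> layer1 (A - {u})" and u_layer: "u \<in> layer1 A" and "p \<noteq> u"
    using act unfolding active_def by auto
  have "u \<in> B"
  proof (rule ccontr)
    assume "u \<notin> B"
    with assms(2) have "B \<subseteq> A - {u}"
      by blast
    with assms(3,4) show False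
      using layer1_antimono[OF p_layer] by blast
  qed
  then have "u \<in> layer1 B"
    using assms(2) by (rule layer1_antimono[OF u_layer])
  moreover have "p \<in> layer1 (B - {u})"
  proof (rule layer1_antimono[OF p_layer])
    show "p \<in> B - {u}" "B - {u} \<subseteq> A - {u}"
      using assms(2,3) \<open>p \<noteq> u\<close> by auto
  qed
  ultimately show ?thesis
    using assms(3,4) \<open>p \<noteq> u\<close> unfolding active_def by blast
qed

lemma hull_essential_points_caratheodory:
  fixes p :: "'a::euclidean_space"
  assumes "p \<in> convex hull T"
  obtains B where "finite B" "card B \<le> DIM('a) + 1" "{u. p \<notin> convex hull (T - {u})} \<subseteq> B"
proof -
  obtain B where B: "finite B" "B \<subseteq> T" "card B \<le> DIM('a) + 1" "p \<in> convex hull B"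
    using assms unfolding caratheodory[of T] by blast
  have "{u. p \<notin> convex hull (T - {u})} \<subseteq> B"
  proof
    fix u assume essential: "u \<in> {u. p \<notin> convex hull (T - {u})}"
    show "u \<in> B"
    proof (rule ccontr)
      assume "u \<notin> B"
      then have "convex hull B \<subseteq> convex hull (T - {u})"
        using B(2) by (intro hull_mono) blast
      with B(4) essential show False
        by blast
    qed
  qed
  with B(1,3) show ?thesis
    by (rule that)
qed

lemma active_caratheodory:
  obtains B :: "pt set" where "finite B" "card B \<le> 3" "{u. active S u p} \<subseteq> B"
proof (cases "\<exists>u. active S u p")
  case False
  then show ?thesis
    by (intro that[of "{}"]) auto
next
  case True
  then have "p \<in> convex hull (S - {p})"
    unfolding active_def layer1_def by auto
  then obtain B where B: "finite B" "card B \<le> DIM(pt) + 1"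
      "{u. p \<notin> convex hull (S - {p} - {u})} \<subseteq> B"
    by (rule hull_essential_points_caratheodory)
  have "{u. active S u p} \<subseteq> B"
  proof
    fix u assume "u \<in> {u. active S u p}"
    then have "p \<notin> convex hull (S - {u} - {p})"
      unfolding active_def layer1_def by blast
    moreover have "S - {u} - {p} = S - {p} - {u}"
      by blast
    ultimately show "u \<in> B"
      using B(3) by auto
  qed
  moreover have "card B \<le> 3"
    using B(2) by simp
  ultimately show ?thesis
    using B(1) that by blast
qed

lemma peeling_process_antimono:
  assumes pp: "peeling_process P S m" and "i \<le> j" "j \<le> m"
  shows "S j \<subseteq> S i"
  using assms(2,3)
proof (induction j rule: dec_induct)
  case base
  then show ?case by simp
next
  case (step j)
  then have "j < m" by simp
  then obtain w where "S (Suc j) = S j - {w}"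
    using pp unfolding peeling_process_def by blast
  with step show ?case by auto
qed

lemma peeling_process_subset:
  assumes "peeling_process P S m" "j \<le> m"
  shows "S j \<subseteq> P"
  using peeling_process_antimono[OF assms(1) _ assms(2), of 0] assms(1)
  unfolding peeling_process_def by auto

lemma active_between:
  assumes pp: "peeling_process P S m" and "i \<le> j" "j \<le> k" "k \<le> m"
    and "active (S i) u p" "active (S k) u p"
  shows "active (S j) u p"
proof -
  have shrink: "S k \<subseteq> S j" "S j \<subseteq> S i"
    using peeling_process_antimono[OF pp] assms(2-4) by auto
  have "p \<in> S k" "p \<notin> layer1 (S k)"
    using assms(6) unfolding active_def by auto
  then have "p \<in> S j" "p \<notin> layer1 (S j)"
    using shrink(1) layer1_antimono[OF _ \<open>p \<in> S k\<close> shrink(1)] by blast+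
  then show ?thesis
    by (rule active_subset[OF assms(5) shrink(2)])
qed

lemma activation_event_unique:
  assumes pp: "peeling_process P S m"
    and "(i, u, p) \<in> activation_events S m" "(k, u, p) \<in> activation_events S m"
  shows "i = k"
proof -
  have not_less: "\<not> i' < k'"
    if "(i', u, p) \<in> activation_events S m" "(k', u, p) \<in> activation_events S m" for i' k'
  proof
    assume "i' < k'"
    with that have "active (S i') u p" "k' \<le> m" "active (S k') u p"
      and "\<not> active (S (k' - 1)) u p"
      unfolding activation_events_def by auto
    with active_between[OF pp, of i' "k' - 1" k'] \<open>i' < k'\<close> show False
      by simp
  qed
  show ?thesis
    using not_less[OF assms(2,3)] not_less[OF assms(3,2)] by simp
qed

lemma card_ever_active_le_3:
  assumes pp: "peeling_process P S m"
  shows "card {u. \<exists>i\<le>m. active (S i) u p} \<le> 3"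
proof (cases "\<exists>i\<le>m. \<exists>u. active (S i) u p")
  case False
  then have "{u. \<exists>i\<le>m. active (S i) u p} = {}"
    by blast
  then show ?thesis
    by (simp only: card.empty)
next
  case True
  define k where "k = Max {i. i \<le> m \<and> (\<exists>u. active (S i) u p)}"
  have "k \<le> m" and "\<exists>u. active (S k) u p"
    using Max_in[of "{i. i \<le> m \<and> (\<exists>u. active (S i) u p)}"] True unfolding k_def by auto
  then have p_inner: "p \<in> S k" "p \<notin> layer1 (S k)"
    unfolding active_def by auto
  have "{u. \<exists>i\<le>m. active (S i) u p} \<subseteq> {u. active (S k) u p}"
  proof
    fix u assume "u \<in> {u. \<exists>i\<le>m. active (S i) u p}"
    then obtain i where "i \<le> m" "active (S i) u p"
      by blast
    then have "i \<le> k"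
      unfolding k_def by (intro Max_ge) (simp, blast)
    then have "S k \<subseteq> S i"
      using peeling_process_antimono[OF pp] \<open>k \<le> m\<close> by blast
    then show "u \<in> {u. active (S k) u p}"
      using active_subset[OF \<open>active (S i) u p\<close> _ p_inner] by blast
  qed
  moreover obtain B where "finite B" "card B \<le> 3" "{u. active (S k) u p} \<subseteq> B"
    by (rule active_caratheodory)
  ultimately have "card {u. \<exists>i\<le>m. active (S i) u p} \<le> card B"
    by (intro card_mono) auto
  with \<open>card B \<le> 3\<close> show ?thesis
    by linarith
qed

lemma activation_events_inj:
  assumes "peeling_process P S m"
  shows "inj_on (\<lambda>(i, u, p). (p, u)) (activation_events S m)"
proof (rule inj_onI)
  fix x y
  assume "x \<in> activation_events S m" "y \<in> activation_events S m"
    and "(\<lambda>(i, u, p). (p, u)) x = (\<lambda>(i, u, p). (p, u)) y"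
  moreover obtain i u p k u' p' where "x = (i, u, p)" "y = (k, u', p')"
    by (metis prod_cases3)
  ultimately show "x = y"
    using activation_event_unique[OF assms] by simp
qed

lemma activation_events_image_subset:
  assumes pp: "peeling_process P S m"
  shows "(\<lambda>(i, u, p). (p, u)) ` activation_events S m
    \<subseteq> (SIGMA p:P. {u. \<exists>i\<le>m. active (S i) u p})"
proof (rule image_subsetI)
  fix x assume "x \<in> activation_events S m"
  moreover obtain i u p where x: "x = (i, u, p)"
    by (metis prod_cases3)
  ultimately have "i \<le> m" "active (S i) u p"
    unfolding activation_events_def by auto
  moreover from this have "p \<in> P"
    using peeling_process_subset[OF pp] unfolding active_def by auto
  ultimately show "(\<lambda>(i, u, p). (p, u)) x \<in> (SIGMA p:P. {u. \<exists>i\<le>m. active (S i) u p})"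
    unfolding x by auto
qed

lemma finite_ever_active:
  assumes "peeling_process P S m" "finite P"
  shows "finite {u. \<exists>i\<le>m. active (S i) u p}"
proof (rule finite_subset[OF _ assms(2)])
  show "{u. \<exists>i\<le>m. active (S i) u p} \<subseteq> P"
    using peeling_process_subset[OF assms(1)] layer1_subset unfolding active_def by blast
qed

theorem theorem2:
  fixes P :: "pt set" and n m :: nat and S :: "nat \<Rightarrow> pt set"
  assumes "finite P" and "card P = n" and "general_position P"
    and "peeling_process P S m"
  shows "card (activation_events S m) \<le> 3 * n"
proof -
  define A where "A p = {u. \<exists>i\<le>m. active (S i) u p}" for p
  have A_finite: "finite (A p)" for p
    unfolding A_def using assms(4,1) by (rule finite_ever_active)
  have "card (activation_events S m) \<le> card (Sigma P A)"
  proof (rule card_inj_on_le[OF activation_events_inj[OF assms(4)]])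
    show "(\<lambda>(i, u, p). (p, u)) ` activation_events S m \<subseteq> Sigma P A"
      unfolding A_def by (rule activation_events_image_subset[OF assms(4)])
    show "finite (Sigma P A)"
      using assms(1) A_finite by blast
  qed
  also have "\<dots> = (\<Sum>p\<in>P. card (A p))"
    using assms(1) A_finite by (simp add: card_SigmaI)
  also have "\<dots> \<le> (\<Sum>p\<in>P. 3)"
    unfolding A_def using card_ever_active_le_3[OF assms(4)] by (rule sum_mono)
  finally show ?thesis
    using assms(2) by simp
qed

end
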